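(* Let $n\ge1$ and $\mathbf{P}_A,\mathbf{P}_B,\mathbf{Q}_A,\mathbf{Q}_B\in\mathbb{R}^{n\times n}$ be symmetric positive definite; $\mathbf{C}_A=\mathbf{P}_A+\mathbf{Q}_A$, $\mathbf{C}_B=\mathbf{P}_B+\mathbf{Q}_B$. Let $\mathbf{K}=(\mathbf{K}_A,\mathbf{K}_B)$ satisfy $\mathbf{K}_A+\mathbf{K}_B=\mathbf{I}$ and let $\mathbf{B}_F$ be a symmetric positive definite matrix such that $\mathbf{B}_F\succeq\mathbf{C}_F(\mathbf{K},\mathbf{P}_{AB})$ for all $\mathbf{P}_{AB}\in\mathcal{A}_{\mathrm{Split}}$. Then $\mathcal{V}^*\subseteq\mathcal{E}(\mathbf{B}_F)$.
   Context: $\mathcal{A}_{\mathrm{Split}}=\{\mathbf{M}\in\mathbb{R}^{n\times n} : \begin{bmatrix}\mathbf{P}_A & \mathbf{M}\\ \mathbf{M}^\intercal & \mathbf{P}_B\end{bmatrix}\succeq 0\}$. $\mathbf{C}_F(\mathbf{K},\mathbf{P}_{AB})=\mathbf{K}_A\mathbf{C}_A\mathbf{K}_A^\intercal+\mathbf{K}_A\mathbf{P}_{AB}\mathbf{K}_B^\intercal+\mathbf{K}_B\mathbf{P}_{AB}^\intercal\mathbf{K}_A^\intercal+\mathbf{K}_B\mathbf{C}_B\mathbf{K}_B^\intercal$. For $\mathbf{P}_{AB}\in\mathcal{A}_{\mathrm{Split}}$ let $\mathbf{R}=\mathbf{C}_A+\mathbf{C}_B-\mathbf{P}_{AB}-\mathbf{P}_{AB}^\intercal$,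 $\mathbf{K}_A^*=(\mathbf{C}_B-\mathbf{P}_{AB}^\intercal)\mathbf{R}^{-1}$, $\mathbf{K}^*=(\mathbf{K}_A^*,\mathbf{I}-\mathbf{K}_A^* )$ and $\mathbf{C}_F^*(\mathbf{P}_{AB})=\mathbf{C}_F(\mathbf{K}^*,\mathbf{P}_{AB})$. For a symmetric positive definite $\mathbf{P}$, $\mathcal{E}(\mathbf{P})=\{\mathbf{x}\in\mathbb{R}^n:\mathbf{x}^\intercal\mathbf{P}^{-1}\mathbf{x}\le1\}$. Define $\mathcal{V}^*=\bigcup_{\mathbf{P}_{AB}\in\mathcal{A}_{\mathrm{Split}}}\mathcal{E}(\mathbf{C}_F^*(\mathbf{P}_{AB}))$. *)

theory Defs
  imports "HOL-Analysis.Analysis"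
begin

definition psd :: "real^'n^'n \<Rightarrow> bool" where
  "psd M \<longleftrightarrow> transpose M = M \<and> (\<forall>x. 0 \<le> x \<bullet> (M *v x))"

definition spd :: "real^'n^'n \<Rightarrow> bool" where
  "spd M \<longleftrightarrow> transpose M = M \<and> (\<forall>x. x \<noteq> 0 \<longrightarrow> 0 < x \<bullet> (M *v x))"

definition loewner_ge :: "real^'n^'n \<Rightarrow> real^'n^'n \<Rightarrow> bool" where
  "loewner_ge A B \<longleftrightarrow> psd (A - B)"

text \<open>The 2n x 2n block matrix [[A, M], [M^T, B]], indexed by 'n + 'n.\<close>
definition block2 :: "real^'n^'n \<Rightarrow> real^'n^'n \<Rightarrow> real^'n^'n \<Rightarrow> real^('n + 'n)^('n + 'n)" where
  "block2 A M B = (\<chi> i j. case i of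
        Inl a \<Rightarrow> (case j of Inl b \<Rightarrow> A $ a $ b | Inr b \<Rightarrow> M $ a $ b)
      | Inr a \<Rightarrow> (case j of Inl b \<Rightarrow> M $ b $ a | Inr b \<Rightarrow> B $ a $ b))"

definition A_Split :: "real^'n^'n \<Rightarrow> real^'n^'n \<Rightarrow> (real^'n^'n) set" where
  "A_Split PA PB = {M. psd (block2 PA M PB)}"

definition C_F :: "real^'n^'n \<Rightarrow> real^'n^'n \<Rightarrow> real^'n^'n \<Rightarrow> real^'n^'n \<Rightarrow> real^'n^'n \<Rightarrow> real^'n^'n" where
  "C_F CA CB KA KB PAB =
     KA ** CA ** transpose KA + KA ** PAB ** transpose KB
     + KB ** transpose PAB ** transpose KA + KB ** CB ** transpose KB"

definition C_F_star :: "real^'n^'n \<Rightarrow> real^'n^'n \<Rightarrow> real^'n^'n \<Rightarrow> real^'n^'n" where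
  "C_F_star CA CB PAB =
     (let R = CA + CB - PAB - transpose PAB;
          KA = (CB - transpose PAB) ** matrix_inv R
      in C_F CA CB KA (mat 1 - KA) PAB)"

definition ellipsoid :: "real^'n^'n \<Rightarrow> (real^'n) set" where
  "ellipsoid P = {x. x \<bullet> (matrix_inv P *v x) \<le> 1}"

definition V_star :: "real^'n^'n \<Rightarrow> real^'n^'n \<Rightarrow> real^'n^'n \<Rightarrow> real^'n^'n \<Rightarrow> (real^'n) set" where
  "V_star PA PB CA CB = (\<Union>PAB \<in> A_Split PA PB. ellipsoid (C_F_star CA CB PAB))"

end

(* Completing the square in the gain: whenever K_A + K_B = I,
     C_F(K, P_AB) = C_F^*(P_AB) + D R D^T   with D = K_A - K_A^*,
   and R is positive definite for P_AB in A_Split, being the quadratic form of the positive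
   semidefinite block matrix [[P_A, P_AB], [P_AB^T, P_B]] at (v, -v) plus Q_A + Q_B.
   Hence C_F^*(P_AB) <= C_F(K, P_AB) <= B_F in the Loewner order, and since inversion reverses
   the Loewner order on positive definite matrices, E(C_F^*(P_AB)) is contained in E(B_F). *)

theory Submission
  imports Defs
begin

lemma transpose_add: "transpose (A + B) = transpose A + transpose (B :: 'a::semiring_1^'n^'m)"
  by (simp add: transpose_def vec_eq_iff)

lemma transpose_diff: "transpose (A - B) = transpose A - transpose (B :: 'a::ring_1^'n^'m)"
  by (simp add: transpose_def vec_eq_iff)

lemma matrix_add_rdistrib: "(A + B) ** C = A ** C + B ** (C :: 'a::semiring_1^'p^'n)"
  by (vector matrix_matrix_mult_def sum.distrib[symmetric] field_simps)

lemma matrix_diff_ldistrib: "A ** (B - C) = A ** B - A ** (C :: 'a::ring_1^'p^'n)"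
  by (vector matrix_matrix_mult_def sum_subtractf[symmetric] field_simps)

lemma matrix_diff_rdistrib: "(A - B) ** C = A ** C - B ** (C :: 'a::ring_1^'p^'n)"
  by (vector matrix_matrix_mult_def sum_subtractf[symmetric] field_simps)

lemmas matrix_ring_simps = matrix_add_ldistrib matrix_add_rdistrib matrix_diff_ldistrib
  matrix_diff_rdistrib transpose_add transpose_diff matrix_transpose_mul matrix_mul_assoc

lemma matrix_inv_right: "invertible A \<Longrightarrow> A ** matrix_inv A = mat 1"
  unfolding invertible_def matrix_inv_def by (rule someI2_ex) auto

lemma matrix_inv_left: "invertible A \<Longrightarrow> matrix_inv A ** A = mat 1"
  unfolding invertible_def matrix_inv_def by (rule someI2_ex) auto

lemma matrix_inv_symmetric:
  fixes A :: "real^'n^'n"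
  assumes "transpose A = A" "invertible A"
  shows "transpose (matrix_inv A) = matrix_inv A"
proof -
  have "transpose (matrix_inv A) = transpose (matrix_inv A) ** (A ** matrix_inv A)"
    using matrix_inv_right[OF assms(2)] by simp
  also have "\<dots> = transpose (A ** matrix_inv A) ** matrix_inv A"
    using assms(1) by (simp add: matrix_mul_assoc matrix_transpose_mul)
  finally show ?thesis
    using matrix_inv_right[OF assms(2)] by simp
qed

lemma inner_matrix_transpose: "(v::real^'n) \<bullet> (X *v u) = (transpose X *v v) \<bullet> u"
  by (simp add: dot_lmul_matrix)

lemma inner_matrix_congruence:
  fixes X Q Z :: "real^'n^'n"
  shows "v \<bullet> ((X ** Q ** transpose Z) *v v) = (transpose X *v v) \<bullet> (Q *v (transpose Z *v v))"
  by (metis inner_matrix_transpose matrix_vector_mul_assoc)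

lemma spd_imp_psd: "spd M \<Longrightarrow> psd M"
  unfolding spd_def psd_def by (metis inner_zero_left order.strict_implies_order order_refl)

lemma spd_invertible:
  fixes M :: "real^'n^'n"
  assumes "spd M"
  shows "invertible M"
proof -
  have "\<forall>x. M *v x = 0 \<longrightarrow> x = 0"
    using assms unfolding spd_def by force
  then obtain B where "B ** M = mat 1"
    using matrix_left_invertible_ker by blast
  then show ?thesis
    using invertible_left_inverse by blast
qed

lemma psd_add: "psd A \<Longrightarrow> psd B \<Longrightarrow> psd (A + B)"
  unfolding psd_def by (simp add: transpose_add matrix_vector_mult_add_rdistrib inner_add_right)

lemma loewner_ge_trans: "loewner_ge A B \<Longrightarrow> loewner_ge B C \<Longrightarrow> loewner_ge A C"
  unfolding loewner_ge_def using psd_add[of "A - B" "B - C"] by simp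

lemma psd_congruence:
  fixes R X :: "real^'n^'n"
  assumes "psd R"
  shows "psd (X ** R ** transpose X)"
  using assms unfolding psd_def
  by (simp add: inner_matrix_congruence matrix_transpose_mul matrix_mul_assoc)

lemma sum_UNIV_Plus:
  "sum g (UNIV :: ('a::finite + 'b::finite) set) = (\<Sum>i\<in>UNIV. g (Inl i)) + (\<Sum>i\<in>UNIV. g (Inr i))"
  using sum.Plus[of "UNIV::'a set" "UNIV::'b set" g] by (simp add: o_def)

lemma inner_block2:
  fixes A M B :: "real^'n^'n" and a b :: "real^'n"
  shows "((\<chi> i. case i of Inl j \<Rightarrow> a $ j | Inr j \<Rightarrow> b $ j) :: real^('n + 'n)) \<bullet>
      (block2 A M B *v (\<chi> i. case i of Inl j \<Rightarrow> a $ j | Inr j \<Rightarrow> b $ j))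
    = a \<bullet> (A *v a) + 2 * (a \<bullet> (M *v b)) + b \<bullet> (B *v b)"
proof -
  have "b \<bullet> (transpose M *v a) = a \<bullet> (M *v b)"
    by (metis inner_matrix_transpose inner_commute)
  moreover have "b \<bullet> (transpose M *v a) = (\<Sum>i\<in>UNIV. b $ i * (\<Sum>j\<in>UNIV. M $ j $ i * a $ j))"
    by (simp add: inner_vec_def matrix_vector_mult_def transpose_def)
  ultimately show ?thesis
    by (simp add: inner_vec_def matrix_vector_mult_def block2_def)
      (simp add: sum_UNIV_Plus algebra_simps sum.distrib)
qed

lemma A_Split_quadratic_nonneg:
  assumes "M \<in> A_Split A B"
  shows "0 \<le> a \<bullet> (A *v a) + 2 * (a \<bullet> (M *v b)) + b \<bullet> (B *v b)"
proof -
  have "psd (block2 A M B)"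
    using assms unfolding A_Split_def by simp
  then show ?thesis
    unfolding psd_def inner_block2[symmetric] by blast
qed

lemma A_Split_symmetric:
  assumes "M \<in> A_Split A B"
  shows "transpose A = A" "transpose B = B"
proof -
  have sym: "transpose (block2 A M B) = block2 A M B"
    using assms unfolding A_Split_def psd_def by simp
  have "transpose (block2 A M B) $ Inl i $ Inl j = block2 A M B $ Inl i $ Inl j"
    "transpose (block2 A M B) $ Inr i $ Inr j = block2 A M B $ Inr i $ Inr j" for i j
    by (simp_all only: sym)
  then show "transpose A = A" "transpose B = B"
    by (simp_all add: vec_eq_iff transpose_def block2_def)
qed

lemma A_Split_add_spd_quadratic_pos:
  assumes "M \<in> A_Split A B" "spd QA" "spd QB" "a \<noteq> 0 \<or> b \<noteq> 0"
  shows "0 < a \<bullet> ((A + QA) *v a) + 2 * (a \<bullet> (M *v b)) + b \<bullet> ((B + QB) *v b)"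
proof -
  have "0 < a \<bullet> (QA *v a) + b \<bullet> (QB *v b)"
    using assms(2-4) spd_imp_psd[OF assms(2)] spd_imp_psd[OF assms(3)]
    unfolding spd_def psd_def by (metis add_pos_nonneg add_nonneg_pos)
  with A_Split_quadratic_nonneg[OF assms(1), of a b] show ?thesis
    by (simp add: matrix_vector_mult_add_rdistrib inner_add_right)
qed

lemma C_F_symmetric:
  assumes "transpose S = S" "transpose T = T"
  shows "transpose (C_F S T X Y P) = C_F S T X Y (P :: real^'n^'n)"
  using assms by (simp add: C_F_def matrix_ring_simps algebra_simps)

lemma inner_C_F:
  fixes S T X Y P :: "real^'n^'n"
  shows "v \<bullet> (C_F S T X Y P *v v) = (transpose X *v v) \<bullet> (S *v (transpose X *v v))
    + 2 * ((transpose X *v v) \<bullet> (P *v (transpose Y *v v)))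
    + (transpose Y *v v) \<bullet> (T *v (transpose Y *v v))"
proof -
  have "(transpose Y *v v) \<bullet> (transpose P *v (transpose X *v v))
      = (transpose X *v v) \<bullet> (P *v (transpose Y *v v))"
    by (metis inner_matrix_transpose inner_commute)
  then show ?thesis
    by (simp only: C_F_def matrix_vector_mult_add_rdistrib inner_add_right inner_matrix_congruence)
qed

lemma C_F_spd:
  fixes PA PB QA QB X Y P :: "real^'n^'n"
  assumes "P \<in> A_Split PA PB" "spd QA" "spd QB" "X + Y = mat 1"
  shows "spd (C_F (PA + QA) (PB + QB) X Y P)"
  unfolding spd_def
proof (intro conjI allI impI)
  show "transpose (C_F (PA + QA) (PB + QB) X Y P) = C_F (PA + QA) (PB + QB) X Y P"
    using A_Split_symmetric[OF assms(1)] assms(2,3)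
    by (intro C_F_symmetric) (simp_all add: spd_def transpose_add)
next
  fix v :: "real^'n"
  assume "v \<noteq> 0"
  moreover have "transpose X *v v + transpose Y *v v = v"
    using assms(4) by (metis matrix_vector_mult_add_rdistrib matrix_vector_mul_lid transpose_add transpose_mat)
  ultimately have "transpose X *v v \<noteq> 0 \<or> transpose Y *v v \<noteq> 0"
    by auto
  then show "0 < v \<bullet> (C_F (PA + QA) (PB + QB) X Y P *v v)"
    unfolding inner_C_F using A_Split_add_spd_quadratic_pos[OF assms(1-3)] by blast
qed

lemma A_Split_difference_spd:
  fixes PA PB QA QB P :: "real^'n^'n"
  assumes "P \<in> A_Split PA PB" "spd QA" "spd QB"
  shows "spd (PA + QA + (PB + QB) - P - transpose P)"
  unfolding spd_def
proof (intro conjI allI impI)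
  show "transpose (PA + QA + (PB + QB) - P - transpose P) = PA + QA + (PB + QB) - P - transpose P"
    using A_Split_symmetric[OF assms(1)] assms(2,3)
    by (simp add: spd_def transpose_add transpose_diff)
next
  fix v :: "real^'n"
  assume "v \<noteq> 0"
  then have "0 < v \<bullet> ((PA + QA) *v v) + 2 * (v \<bullet> (P *v - v)) + (- v) \<bullet> ((PB + QB) *v - v)"
    using A_Split_add_spd_quadratic_pos[OF assms] by blast
  moreover have "v \<bullet> (transpose P *v v) = v \<bullet> (P *v v)"
    by (metis inner_matrix_transpose transpose_transpose inner_commute)
  moreover have "M *v - v = - (M *v v)" for M :: "real^'n^'n"
    by (metis add_eq_0_iff matrix_vector_right_distrib matrix_vector_mult_0_right)
  ultimately show "0 < v \<bullet> ((PA + QA + (PB + QB) - P - transpose P) *v v)"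
    by (simp add: matrix_vector_mult_add_rdistrib matrix_vector_mult_diff_rdistrib
        inner_add_right inner_diff_right)
qed

lemma matrix_complete_square:
  fixes R G X T :: "real^'n^'n"
  assumes "transpose R = R" "invertible R"
  shows "X ** R ** transpose X - X ** transpose G - G ** transpose X + T
    = (X - G ** matrix_inv R) ** R ** transpose (X - G ** matrix_inv R)
      + (T - G ** matrix_inv R ** transpose G)"
proof -
  have "A ** R ** matrix_inv R = A" for A :: "real^'n^'n"
    by (metis matrix_inv_right[OF assms(2)] matrix_mul_assoc matrix_mul_rid)
  moreover have "A ** matrix_inv R ** R = A" for A :: "real^'n^'n"
    by (metis matrix_inv_left[OF assms(2)] matrix_mul_assoc matrix_mul_rid)
  ultimately show ?thesis
    using matrix_inv_symmetric[OF assms]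
    by (simp add: matrix_ring_simps algebra_simps)
qed

lemma C_F_complementary_gain:
  fixes S T X P :: "real^'n^'n"
  assumes "transpose T = T"
  shows "C_F S T X (mat 1 - X) P = X ** (S + T - P - transpose P) ** transpose X
    - X ** transpose (T - transpose P) - (T - transpose P) ** transpose X + T"
  using assms by (simp add: C_F_def matrix_ring_simps algebra_simps)

lemma C_F_eq_C_F_star_add:
  fixes S T X P :: "real^'n^'n"
  defines "R \<equiv> S + T - P - transpose P"
  defines "K \<equiv> (T - transpose P) ** matrix_inv R"
  assumes "transpose S = S" "transpose T = T" "invertible R"
  shows "C_F S T X (mat 1 - X) P = C_F_star S T P + (X - K) ** R ** transpose (X - K)"
proof -
  have "transpose R = R"
    using assms(3,4) unfolding R_def by (simp add: transpose_add transpose_diff)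
  note square = matrix_complete_square[OF this assms(5), where G = "T - transpose P" and T = T]
  have "C_F_star S T P = C_F S T K (mat 1 - K) P"
    unfolding C_F_star_def Let_def K_def R_def ..
  also have "\<dots> = T - (T - transpose P) ** matrix_inv R ** transpose (T - transpose P)"
    unfolding C_F_complementary_gain[OF assms(4)] R_def[symmetric] square K_def by simp
  finally show ?thesis
    unfolding C_F_complementary_gain[OF assms(4)] R_def[symmetric] square K_def by simp
qed

lemma C_F_star_le_C_F:
  fixes S T X P :: "real^'n^'n"
  assumes "transpose S = S" "transpose T = T" "spd (S + T - P - transpose P)"
  shows "loewner_ge (C_F S T X (mat 1 - X) P) (C_F_star S T P)"
  unfolding loewner_ge_def
  using C_F_eq_C_F_star_add[OF assms(1,2) spd_invertible[OF assms(3)]]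
    psd_congruence[OF spd_imp_psd[OF assms(3)]]
  by simp

lemma C_F_star_spd:
  fixes PA PB QA QB P :: "real^'n^'n"
  assumes "P \<in> A_Split PA PB" "spd QA" "spd QB"
  shows "spd (C_F_star (PA + QA) (PB + QB) P)"
  unfolding C_F_star_def Let_def by (rule C_F_spd[OF assms]) simp

lemma ellipsoid_mono:
  fixes A B :: "real^'n^'n"
  assumes "psd A" "invertible A" "invertible B" "loewner_ge B A"
  shows "ellipsoid A \<subseteq> ellipsoid B"
proof
  fix x assume "x \<in> ellipsoid A"
  define y where "y = matrix_inv B *v x"
  define z where "z = matrix_inv A *v x"
  have By: "B *v y = x" and Az: "A *v z = x"
    unfolding y_def z_def
    by (simp_all add: matrix_vector_mul_assoc matrix_inv_right assms(2,3))
  \<comment> \<open>\<open>x \<bullet> A\<inverse> x\<close> is the maximum of \<open>2 x \<bullet> y - y \<bullet> A y\<close>; evaluate at \<open>y = B\<inverse> x\<close>.\<close>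
  have "0 \<le> (y - z) \<bullet> (A *v (y - z))"
    using assms(1) unfolding psd_def by blast
  also have "\<dots> = y \<bullet> (A *v y) - 2 * (x \<bullet> y) + z \<bullet> x"
    using assms(1) unfolding psd_def
    by (simp add: matrix_vector_mult_diff_distrib inner_diff_left inner_diff_right Az
        inner_commute inner_matrix_transpose[of z A y])
  finally have "2 * (x \<bullet> y) - y \<bullet> (A *v y) \<le> z \<bullet> x" by simp
  moreover have "y \<bullet> (A *v y) \<le> y \<bullet> x"
    using assms(4) By unfolding loewner_ge_def psd_def
    by (metis diff_ge_0_iff_ge inner_diff_right matrix_vector_mult_diff_rdistrib)
  ultimately have "x \<bullet> y \<le> x \<bullet> z"
    by (simp add: inner_commute)
  then show "x \<in> ellipsoid B"
    using \<open>x \<in> ellipsoid A\<close> unfolding ellipsoid_def y_def z_def by simp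
qed

theorem lemma2:
  fixes PA PB QA QB KA KB BF :: "real^'n^'n"
  assumes "spd PA" and "spd PB" and "spd QA" and "spd QB"
    and "KA + KB = mat 1"
    and "spd BF"
    and "\<forall>PAB \<in> A_Split PA PB. loewner_ge BF (C_F (PA + QA) (PB + QB) KA KB PAB)"
  shows "V_star PA PB (PA + QA) (PB + QB) \<subseteq> ellipsoid BF"
proof
  fix x assume "x \<in> V_star PA PB (PA + QA) (PB + QB)"
  then obtain P where P: "P \<in> A_Split PA PB"
    and x: "x \<in> ellipsoid (C_F_star (PA + QA) (PB + QB) P)"
    unfolding V_star_def by blast
  have "transpose (PA + QA) = PA + QA" "transpose (PB + QB) = PB + QB"
    using A_Split_symmetric[OF P] assms(3,4) by (simp_all add: spd_def transpose_add)
  then have "loewner_ge (C_F (PA + QA) (PB + QB) KA KB P) (C_F_star (PA + QA) (PB + QB) P)"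
    using C_F_star_le_C_F A_Split_difference_spd[OF P assms(3,4)] assms(5)
    by (metis add_diff_cancel_left')
  then have "loewner_ge BF (C_F_star (PA + QA) (PB + QB) P)"
    using loewner_ge_trans assms(7) P by blast
  moreover have "spd (C_F_star (PA + QA) (PB + QB) P)"
    using C_F_star_spd[OF P assms(3,4)] .
  ultimately show "x \<in> ellipsoid BF"
    using ellipsoid_mono spd_imp_psd spd_invertible assms(6) x by blast
qed

end
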